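(* Let $H_A$ and $H_B$ be finite-dimensional Hilbert spaces and let $|\phi\rangle,|\psi\rangle\in H_A\otimes H_B$ be unit vectors such that $\langle\phi|\psi\rangle$ is a real positive number. Let $s,t>0$ with $s+t=1$, $s\le t$ and $\sqrt{s/t}\ge\langle\phi|\psi\rangle$. Then there exist a finite-dimensional auxiliary Hilbert space $H_S$ (held by Alice) with a unit vector $|0\rangle_S$ and an orthonormal set $\{|i\rangle_S\}_{i=1}^N$, a unitary $U^{AS}$ on $H_S\otimes H_A$, an integer $0\le m\le N$, nonnegative reals $s_i,t_i$, unit vectors $|\phi_i\rangle,|\psi_i\rangle\in H_A\otimes H_B$ for $i\le m$, and unit vectors $|i\rangle\in H_A$ and $|\eta_i\rangle,|\gamma_i\rangle\in H_B$ for $i>m$, such that $$U^{AS}|0\rangle_S|\phi\rangle=\sum_{i=1}^m\sqrt{s_i}\,|i\rangle_S|\phi_i\rangle+\sum_{i=m+1}^N\sqrt{s_i}\,|i\rangle_S|i\rangle|\eta_i\rangle,$$ $$U^{AS}|0\rangle_S|\psi\rangle=\sum_{i=1}^m\sqrt{t_i}\,|i\rangle_S|\psi_i\rangle+\sum_{i=m+1}^N\sqrt{t_i}\,|i\rangle_S|i\rangle|\gamma_i\rangle,$$ where $\langle\phi_i|\psi_i\rangle=0$ for $i\le m$, and for $i>m$ the number $\langle\eta_i|\gamma_i\rangle$ is real and $1\ge\sqrt{s s_i/(t t_i)}\ge\langle\eta_i|\gamma_i\rangle\ge0$.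
   Context: Here $s$ and $t$ are the prior probabilities with which the states $|\phi\rangle$ and $|\psi\rangle$ are prepared. The unitary $U^{AS}$ acts only on Alice's system $A$ together with the auxiliary system $S$, tensored with the identity on Bob's system $B$. The paper adopts throughout the normalization (by a global phase on $|\psi\rangle$) that $\langle\phi|\psi\rangle>0$, and the lemma is used under the case assumption $\sqrt{s/t}\ge\langle\phi|\psi\rangle$. *)

theory Defs
  imports Complex_Main
begin

text \<open>Finite-dimensional Hilbert spaces are modelled concretely:
  H_A = functions 'a \<Rightarrow> complex and H_B = functions 'b \<Rightarrow> complex for finite
  basis-index types 'a, 'b; H_A \<otimes> H_B = functions 'a \<times> 'b \<Rightarrow> complex.
  The auxiliary space H_S (existentially chosen) is C^dS, i.e. functions
  nat \<Rightarrow> complex restricted to indices < dS; H_S \<otimes> H_A \<otimes> H_B is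
  nat \<times> 'a \<times> 'b \<Rightarrow> complex restricted to first index < dS.\<close>

definition ip :: "('x::finite \<Rightarrow> complex) \<Rightarrow> ('x \<Rightarrow> complex) \<Rightarrow> complex" where
  "ip v w = (\<Sum>x\<in>UNIV. cnj (v x) * w x)"

definition ipS :: "nat \<Rightarrow> (nat \<Rightarrow> complex) \<Rightarrow> (nat \<Rightarrow> complex) \<Rightarrow> complex" where
  "ipS n v w = (\<Sum>k<n. cnj (v k) * w k)"

definition idxSA :: "nat \<Rightarrow> (nat \<times> 'a::finite) set" where
  "idxSA dS = {..<dS} \<times> (UNIV :: 'a set)"

definition unitary_SA :: "nat \<Rightarrow> (nat \<times> 'a::finite \<Rightarrow> nat \<times> 'a \<Rightarrow> complex) \<Rightarrow> bool" where
  "unitary_SA dS U \<longleftrightarrow>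
     (\<forall>x\<in>idxSA dS. \<forall>y\<in>idxSA dS.
        (\<Sum>z\<in>idxSA dS. cnj (U z x) * U z y) = (if x = y then 1 else 0))"

text \<open>Action of U \<otimes> 1_B on a state in H_S \<otimes> H_A \<otimes> H_B.\<close>
definition apply_SA :: "nat \<Rightarrow> (nat \<times> 'a::finite \<Rightarrow> nat \<times> 'a \<Rightarrow> complex)
     \<Rightarrow> (nat \<times> 'a \<times> 'b \<Rightarrow> complex) \<Rightarrow> (nat \<times> 'a \<times> 'b \<Rightarrow> complex)" where
  "apply_SA dS U \<Psi> = (\<lambda>(k, a, b). \<Sum>p\<in>idxSA dS. U (k, a) p * \<Psi> (fst p, snd p, b))"

end

theory Submission
  imports Defs
begin

text \<open>With \<open>\<rho> = sqrt (s / t)\<close>, write \<open>\<phi> = \<xi> + \<alpha> w\<close> and \<open>\<psi> = \<rho> \<xi> + \<beta> w\<close> with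
  \<open>w = \<psi> - \<rho> \<phi>\<close> and \<open>\<xi> \<bottom> w\<close>. The operator \<open>tr\<^sub>B |w\<rangle>\<langle>\<xi>|\<close> on \<open>H\<^sub>A\<close> is traceless, so it has
  zero diagonal in some orthonormal basis (Givens rotations chosen by the intermediate value
  theorem). Measuring \<open>A\<close> in that basis keeps \<open>\<xi>\<close> and \<open>w\<close> orthogonal in every branch \<open>a\<close>, so the
  branch states \<open>u\<^sub>a\<close>, \<open>v\<^sub>a\<close> of \<open>\<phi>\<close>, \<open>\<psi>\<close> have real overlap \<open>k\<^sub>a \<le> \<rho> |u\<^sub>a|\<^sup>2\<close> and satisfy
  \<open>\<rho>\<^sup>2 |u\<^sub>a|\<^sup>2 \<le> |v\<^sub>a|\<^sup>2\<close>, with \<open>\<Sum>\<^sub>a k\<^sub>a = \<langle>\<phi>|\<psi>\<rangle> > 0\<close>. A rotation of the auxiliary system,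
  controlled by the outcome, moves a common fraction \<open>\<mu>\<close> of every branch with \<open>k\<^sub>a > 0\<close> into
  a slot of its own; there it is a product branch obeying the ratio condition. Taking for \<open>\<mu>\<close>
  the sum of all \<open>k\<^sub>a\<close> divided by the sum of the positive ones makes the overlap left behind in
  slot \<open>0\<close> vanish, so the remainder is a pair of orthogonal states.\<close>

section \<open>Inner products\<close>

lemma sum_split_pair:
  assumes "finite A" "p \<in> A" "l \<in> A" "p \<noteq> l"
  shows "sum f A = f p + f l + sum f (A - {p, l})"
proof -
  have "sum f A = f p + sum f (A - {p})" using assms by (simp add: sum.remove)
  also have "sum f (A - {p}) = f l + sum f (A - {p} - {l})" using assms by (intro sum.remove) auto
  also have "A - {p} - {l} = A - {p, l}" by auto
  finally show ?thesis by (simp add: add.assoc)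
qed

lemma ip_add_left: "ip (\<lambda>x. f x + g x) h = ip f h + ip g h"
  unfolding ip_def by (simp add: algebra_simps sum.distrib)

lemma ip_add_right: "ip h (\<lambda>x. f x + g x) = ip h f + ip h g"
  unfolding ip_def by (simp add: algebra_simps sum.distrib)

lemma ip_scale_left: "ip (\<lambda>x. c * f x) g = cnj c * ip f g"
  unfolding ip_def by (simp add: algebra_simps sum_distrib_left)

lemma ip_scale_right: "ip f (\<lambda>x. c * g x) = c * ip f g"
  unfolding ip_def by (simp add: algebra_simps sum_distrib_left)

lemma ip_lincomb_left: "ip (\<lambda>x. \<alpha> * f x + \<beta> * g x) h = cnj \<alpha> * ip f h + cnj \<beta> * ip g h"
  by (simp add: ip_add_left ip_scale_left)

lemma ip_lincomb_right: "ip h (\<lambda>x. \<alpha> * f x + \<beta> * g x) = \<alpha> * ip h f + \<beta> * ip h g"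
  by (simp add: ip_add_right ip_scale_right)

lemma ip_cnj_swap: "ip g f = cnj (ip f g)"
  unfolding ip_def by (simp add: mult.commute)

lemma ip_self_eq_sum: "ip f f = complex_of_real (\<Sum>x\<in>UNIV. (cmod (f x))\<^sup>2)"
  unfolding ip_def of_real_sum
  by (intro sum.cong refl) (subst complex_norm_square, simp add: mult.commute)

lemma ip_self_real: "ip f f = complex_of_real (Re (ip f f))"
  unfolding ip_self_eq_sum by simp

lemma ip_self_nonneg: "Re (ip f f) \<ge> 0"
  unfolding ip_self_eq_sum by (simp add: sum_nonneg)

lemma ip_self_eq_0_iff: "Re (ip f f) = 0 \<longleftrightarrow> f = (\<lambda>x. 0)"
proof
  assume "Re (ip f f) = 0"
  then have "\<forall>x\<in>UNIV. (cmod (f x))\<^sup>2 = 0"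
    unfolding ip_self_eq_sum by (subst sum_nonneg_eq_0_iff[symmetric]) auto
  then show "f = (\<lambda>x. 0)" by auto
qed (simp add: ip_def)

lemma ip_self_pos_iff: "0 < Re (ip f f) \<longleftrightarrow> f \<noteq> (\<lambda>x. 0)"
  using ip_self_nonneg[of f] ip_self_eq_0_iff[of f] by linarith

lemma ip_self_pos_if_Re_ip_pos:
  assumes "0 < Re (ip u v)"
  shows "0 < Re (ip u u) \<and> 0 < Re (ip v v)"
  using assms unfolding ip_self_pos_iff by (auto simp: ip_def)

lemma ip_indicator_left: "ip (\<lambda>x. if x = a then 1 else 0) f = f a"
proof -
  have "ip (\<lambda>x. if x = a then 1 else 0) f = (\<Sum>x\<in>UNIV. if x = a then f a else 0)"
    unfolding ip_def by (rule sum.cong) auto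
  then show ?thesis by simp
qed

lemma ip_prod_type: "ip f g = (\<Sum>a\<in>UNIV. \<Sum>b\<in>UNIV. cnj (f (a, b)) * g (a, b))"
  unfolding ip_def UNIV_Times_UNIV[symmetric] sum.cartesian_product by simp

lemma ip_weighted_branches:
  "ip (\<lambda>(a, b). c a * f a b) (\<lambda>(a, b). c a * g a b) = (\<Sum>a\<in>UNIV. cnj (c a) * c a * ip (f a) (g a))"
  unfolding ip_prod_type ip_def by (simp add: sum_distrib_left algebra_simps)

definition normalized :: "('x::finite \<Rightarrow> complex) \<Rightarrow> 'x \<Rightarrow> complex" where
  "normalized f = (\<lambda>i. f i / sqrt (Re (ip f f)))"

lemma ip_normalized:
  "ip (normalized f) (normalized g) = ip f g / (sqrt (Re (ip f f)) * sqrt (Re (ip g g)))"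
  unfolding normalized_def ip_def by (simp add: sum_divide_distrib)

lemma ip_normalized_left: "ip (normalized f) g = ip f g / sqrt (Re (ip f f))"
  unfolding normalized_def ip_def by (simp add: sum_divide_distrib)

lemma ip_normalized_self:
  assumes "Re (ip f f) > 0"
  shows "ip (normalized f) (normalized f) = 1"
  using assms unfolding ip_normalized
  by (subst (1) ip_self_real) (simp del: of_real_mult flip: of_real_mult)

lemma normalized_scale:
  assumes "Re (ip f f) > 0"
  shows "f = (\<lambda>i. sqrt (Re (ip f f)) * normalized f i)"
  using assms unfolding normalized_def by auto

lemma exists_unit_orthogonal:
  fixes y :: "'x::finite \<Rightarrow> complex"
  assumes "(i1::'x) \<noteq> i2"
  shows "\<exists>x. ip x x = 1 \<and> ip x y = 0"
proof -
  define x where "x = (\<lambda>i. if i = i1 then cnj (y i2) else if i = i2 then - cnj (y i1) else 0)"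
  have "ip x y = cnj (x i1) * y i1 + cnj (x i2) * y i2 + (\<Sum>i\<in>UNIV-{i1,i2}. cnj (x i) * y i)"
    unfolding ip_def using assms by (intro sum_split_pair) auto
  then have xy: "ip x y = 0" unfolding x_def using assms by (simp add: mult.commute)
  show ?thesis
  proof (cases "x = (\<lambda>i. 0)")
    case True
    then have "y i1 = 0" using assms unfolding x_def by (metis complex_cnj_zero_iff neg_equal_0_iff_equal)
    then show ?thesis by (intro exI[of _ "\<lambda>i. if i = i1 then 1 else 0"]) (simp add: ip_indicator_left)
  next
    case False
    then have "Re (ip x x) > 0" by (simp add: ip_self_pos_iff)
    then show ?thesis using ip_normalized_self ip_normalized_left[of x y] xy by auto
  qed
qed

lemma exists_unit_direction:
  fixes m y :: "'x::finite \<Rightarrow> complex"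
  assumes "(i1::'x) \<noteq> i2" and "ip m y = 0"
  shows "\<exists>x::'x \<Rightarrow> complex. ip x x = 1 \<and> ip x y = 0 \<and> m = (\<lambda>i. sqrt (Re (ip m m)) * x i)"
proof (cases "m = (\<lambda>i. 0)")
  case True
  then show ?thesis using exists_unit_orthogonal[OF assms(1)] by (simp add: ip_def)
next
  case False
  then have pos: "Re (ip m m) > 0" by (simp add: ip_self_pos_iff)
  have "ip (normalized m) y = 0" using assms(2) ip_normalized_left[of m y] by simp
  then show ?thesis using ip_normalized_self[OF pos] normalized_scale[OF pos] by blast
qed

lemma exists_orthonormal_directions:
  fixes m1 m2 :: "'x::finite \<Rightarrow> complex"
  assumes i: "(i1::'x) \<noteq> i2" and m: "ip m1 m2 = 0"
  shows "\<exists>(x::'x \<Rightarrow> complex) (y::'x \<Rightarrow> complex). ip x x = 1 \<and> ip y y = 1 \<and> ip x y = 0 \<and>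
           m1 = (\<lambda>i. sqrt (Re (ip m1 m1)) * x i) \<and> m2 = (\<lambda>i. sqrt (Re (ip m2 m2)) * y i)"
proof (cases "m1 = (\<lambda>i. 0)")
  case True
  obtain y :: "'x \<Rightarrow> complex" where y: "ip y y = 1" "m2 = (\<lambda>i. sqrt (Re (ip m2 m2)) * y i)"
    using exists_unit_direction[OF i, of m2 "\<lambda>i. 0"] by (auto simp: ip_def)
  moreover obtain x :: "'x \<Rightarrow> complex"
    where "ip x x = 1" "ip x y = 0" "m1 = (\<lambda>i. sqrt (Re (ip m1 m1)) * x i)"
    using exists_unit_direction[OF i, of m1 y] True by (auto simp: ip_def)
  ultimately show ?thesis by blast
next
  case False
  obtain x :: "'x \<Rightarrow> complex" where x: "ip x x = 1" "m1 = (\<lambda>i. sqrt (Re (ip m1 m1)) * x i)"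
    using exists_unit_direction[OF i, of m1 "\<lambda>i. 0"] by (auto simp: ip_def)
  have "Re (ip m1 m1) \<noteq> 0" using False ip_self_eq_0_iff by blast
  moreover have "ip m2 m1 = sqrt (Re (ip m1 m1)) * ip m2 x"
    by (subst x(2)) (rule ip_scale_right)
  ultimately have "ip m2 x = 0" using m ip_cnj_swap[of m2 m1] by simp
  then obtain y :: "'x \<Rightarrow> complex"
    where "ip y y = 1" "ip y x = 0" "m2 = (\<lambda>i. sqrt (Re (ip m2 m2)) * y i)"
    using exists_unit_direction[OF i] by blast
  then show ?thesis using x ip_cnj_swap[of x y] by (intro exI[of _ x] exI[of _ y]) simp
qed

section \<open>Traceless matrices have zero diagonal in some orthonormal basis\<close>

definition sesq_form :: "('a::finite \<Rightarrow> 'a \<Rightarrow> complex) \<Rightarrow> ('a \<Rightarrow> complex) \<Rightarrow> ('a \<Rightarrow> complex) \<Rightarrow> complex" where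
  "sesq_form M x y = (\<Sum>a\<in>UNIV. \<Sum>a'\<in>UNIV. cnj (x a) * M a a' * y a')"

definition quad_form :: "('a::finite \<Rightarrow> 'a \<Rightarrow> complex) \<Rightarrow> ('a \<Rightarrow> complex) \<Rightarrow> complex" where
  "quad_form M x = sesq_form M x x"

definition hermitian :: "('a \<Rightarrow> 'a \<Rightarrow> complex) \<Rightarrow> bool" where
  "hermitian M \<longleftrightarrow> (\<forall>a a'. M a' a = cnj (M a a'))"

definition trace_mat :: "('a::finite \<Rightarrow> 'a \<Rightarrow> complex) \<Rightarrow> complex" where
  "trace_mat M = (\<Sum>a\<in>UNIV. M a a)"

definition col :: "('a \<Rightarrow> 'b \<Rightarrow> complex) \<Rightarrow> 'b \<Rightarrow> 'a \<Rightarrow> complex" where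
  "col X j = (\<lambda>a. X a j)"

text \<open>Only \<open>X X\<^sup>* = 1\<close> is required; for square matrices this is unitarity.\<close>
definition unitary_mat :: "('a::finite \<Rightarrow> 'a \<Rightarrow> complex) \<Rightarrow> bool" where
  "unitary_mat X \<longleftrightarrow> (\<forall>a a'. (\<Sum>j\<in>UNIV. X a j * cnj (X a' j)) = (if a = a' then 1 else 0))"

lemma sesq_form_add_left: "sesq_form M (\<lambda>a. x a + y a) z = sesq_form M x z + sesq_form M y z"
  unfolding sesq_form_def by (simp add: algebra_simps sum.distrib)

lemma sesq_form_add_right: "sesq_form M z (\<lambda>a. x a + y a) = sesq_form M z x + sesq_form M z y"
  unfolding sesq_form_def by (simp add: algebra_simps sum.distrib)

lemma sesq_form_scale_left: "sesq_form M (\<lambda>a. c * x a) z = cnj c * sesq_form M x z"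
  unfolding sesq_form_def by (simp add: algebra_simps sum_distrib_left)

lemma sesq_form_scale_right: "sesq_form M z (\<lambda>a. c * x a) = c * sesq_form M z x"
  unfolding sesq_form_def by (simp add: algebra_simps sum_distrib_left)

lemma quad_form_lincomb:
  "quad_form M (\<lambda>a. \<alpha> * x a + \<beta> * y a) =
     cnj \<alpha> * \<alpha> * quad_form M x + cnj \<beta> * \<beta> * quad_form M y
     + cnj \<alpha> * \<beta> * sesq_form M x y + cnj \<beta> * \<alpha> * sesq_form M y x"
  unfolding quad_form_def
  by (simp add: sesq_form_add_left sesq_form_add_right sesq_form_scale_left sesq_form_scale_right
      algebra_simps)

lemma quad_form_add_mat: "quad_form (\<lambda>a a'. A a a' + B a a') x = quad_form A x + quad_form B x"
  unfolding quad_form_def sesq_form_def by (simp add: algebra_simps sum.distrib)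

lemma quad_form_scale_mat: "quad_form (\<lambda>a a'. c * A a a') x = c * quad_form A x"
  unfolding quad_form_def sesq_form_def by (simp add: algebra_simps sum_distrib_left)

lemma hermitian_sesq_form_swap:
  assumes "hermitian M"
  shows "sesq_form M y x = cnj (sesq_form M x y)"
proof -
  have "sesq_form M y x = (\<Sum>a'\<in>UNIV. \<Sum>a\<in>UNIV. cnj (y a) * M a a' * x a')"
    unfolding sesq_form_def by (rule sum.swap)
  also have "\<dots> = (\<Sum>a'\<in>UNIV. \<Sum>a\<in>UNIV. x a' * cnj (M a' a) * cnj (y a))"
    using assms unfolding hermitian_def by (intro sum.cong refl) (metis mult.commute mult.left_commute)
  also have "\<dots> = cnj (sesq_form M x y)"
    unfolding sesq_form_def by (simp add: cnj_sum)
  finally show ?thesis .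
qed

lemma hermitian_quad_form_real:
  assumes "hermitian M"
  shows "quad_form M x = complex_of_real (Re (quad_form M x))"
proof -
  have "cnj (quad_form M x) = quad_form M x"
    using hermitian_sesq_form_swap[OF assms, of x x] unfolding quad_form_def by simp
  then show ?thesis by (simp add: complex_eq_iff)
qed

lemma sum_quad_form_cols:
  assumes "unitary_mat X"
  shows "(\<Sum>j\<in>UNIV. quad_form F (col X j)) = trace_mat F"
proof -
  have "(\<Sum>j\<in>UNIV. quad_form F (col X j))
      = (\<Sum>j\<in>UNIV. \<Sum>a\<in>UNIV. \<Sum>a'\<in>UNIV. F a a' * (X a' j * cnj (X a j)))"
    unfolding quad_form_def sesq_form_def col_def by (simp add: algebra_simps)
  also have "\<dots> = (\<Sum>a\<in>UNIV. \<Sum>j\<in>UNIV. \<Sum>a'\<in>UNIV. F a a' * (X a' j * cnj (X a j)))"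
    by (rule sum.swap)
  also have "\<dots> = (\<Sum>a\<in>UNIV. \<Sum>a'\<in>UNIV. F a a' * (\<Sum>j\<in>UNIV. X a' j * cnj (X a j)))"
    unfolding sum_distrib_left by (rule sum.cong[OF refl], rule sum.swap)
  also have "\<dots> = trace_mat F"
  proof -
    have rows: "\<And>a a'. (\<Sum>j\<in>UNIV. X a' j * cnj (X a j)) = (if a' = a then 1 else 0)"
      using assms unfolding unitary_mat_def by blast
    show ?thesis unfolding trace_mat_def rows by (simp add: if_distrib cong: if_cong)
  qed
  finally show ?thesis .
qed

lemma unitary_mat_id: "unitary_mat (\<lambda>a j. if a = j then 1 else 0)"
proof -
  have "(\<Sum>j\<in>UNIV. (if a = j then 1 else 0) * cnj (if a' = j then 1 else 0)) = (if a = a' then 1 else 0)"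
    for a a' :: 'a
    using ip_indicator_left[of a' "\<lambda>j. if a = j then 1 else 0"] unfolding ip_def
    by (simp add: mult.commute eq_commute)
  then show ?thesis unfolding unitary_mat_def by blast
qed

definition givens :: "('a \<Rightarrow> 'a \<Rightarrow> complex) \<Rightarrow> 'a \<Rightarrow> 'a \<Rightarrow> real \<Rightarrow> complex \<Rightarrow> 'a \<Rightarrow> 'a \<Rightarrow> complex" where
  "givens X p l \<theta> z = (\<lambda>a j.
     if j = p then of_real (cos \<theta>) * X a p + z * of_real (sin \<theta>) * X a l
     else if j = l then - of_real (sin \<theta>) * X a p + z * of_real (cos \<theta>) * X a l
     else X a j)"

lemma col_givens_p:
  "col (givens X p l \<theta> z) p = (\<lambda>a. of_real (cos \<theta>) * col X p a + (z * of_real (sin \<theta>)) * col X l a)"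
  unfolding givens_def col_def by simp

lemma col_givens_l:
  "p \<noteq> l \<Longrightarrow>
    col (givens X p l \<theta> z) l = (\<lambda>a. (- of_real (sin \<theta>)) * col X p a + (z * of_real (cos \<theta>)) * col X l a)"
  unfolding givens_def col_def by simp

lemma col_givens_other: "j \<noteq> p \<Longrightarrow> j \<noteq> l \<Longrightarrow> col (givens X p l \<theta> z) j = col X j"
  unfolding givens_def col_def by simp

lemma cos_sin_sq_complex:
  "of_real (cos \<theta>) * of_real (cos \<theta>) + of_real (sin \<theta>) * of_real (sin \<theta>) = (1::complex)"
  by (metis of_real_1 of_real_add of_real_mult power2_eq_square sin_cos_squared_add2)

lemma unitary_givens:
  assumes X: "unitary_mat X" and pl: "p \<noteq> l" and z: "cnj z * z = 1"
  shows "unitary_mat (givens X p l \<theta> z)"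
  unfolding unitary_mat_def
proof (intro allI)
  fix a a'
  let ?G = "givens X p l \<theta> z"
  have "?G a p * cnj (?G a' p) + ?G a l * cnj (?G a' l) =
      (of_real (cos \<theta>) * of_real (cos \<theta>) + of_real (sin \<theta>) * of_real (sin \<theta>)) * (X a p * cnj (X a' p))
      + (z * cnj z) * (of_real (cos \<theta>) * of_real (cos \<theta>) + of_real (sin \<theta>) * of_real (sin \<theta>))
        * (X a l * cnj (X a' l))"
    unfolding givens_def using pl by (simp add: algebra_simps)
  then have pair: "?G a p * cnj (?G a' p) + ?G a l * cnj (?G a' l) =
      X a p * cnj (X a' p) + X a l * cnj (X a' l)"
    using cos_sin_sq_complex z by (simp add: mult.commute)
  have rest: "(\<Sum>j\<in>UNIV-{p,l}. ?G a j * cnj (?G a' j)) = (\<Sum>j\<in>UNIV-{p,l}. X a j * cnj (X a' j))"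
    by (rule sum.cong) (auto simp: givens_def)
  show "(\<Sum>j\<in>UNIV. ?G a j * cnj (?G a' j)) = (if a = a' then 1 else 0)"
    using sum_split_pair[OF _ _ _ pl, of UNIV "\<lambda>j. ?G a j * cnj (?G a' j)"]
      sum_split_pair[OF _ _ _ pl, of UNIV "\<lambda>j. X a j * cnj (X a' j)"] pair rest X
    unfolding unitary_mat_def by simp
qed

lemma quad_form_givens_p:
  assumes "cnj z * z = 1"
  shows "quad_form M (col (givens X p l \<theta> z) p) =
    of_real (cos \<theta>) * of_real (cos \<theta>) * quad_form M (col X p)
    + of_real (sin \<theta>) * of_real (sin \<theta>) * quad_form M (col X l)
    + of_real (cos \<theta>) * of_real (sin \<theta>)
      * (z * sesq_form M (col X p) (col X l) + cnj z * sesq_form M (col X l) (col X p))"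
proof -
  have zz: "\<And>w. z * (cnj z * w) = w" using assms by (metis mult.assoc mult.commute mult_1)
  show ?thesis unfolding col_givens_p quad_form_lincomb by (simp add: algebra_simps zz)
qed

lemma quad_form_givens_l:
  assumes "cnj z * z = 1" and "p \<noteq> l"
  shows "quad_form M (col (givens X p l \<theta> z) l) =
    of_real (sin \<theta>) * of_real (sin \<theta>) * quad_form M (col X p)
    + of_real (cos \<theta>) * of_real (cos \<theta>) * quad_form M (col X l)
    - of_real (cos \<theta>) * of_real (sin \<theta>)
      * (z * sesq_form M (col X p) (col X l) + cnj z * sesq_form M (col X l) (col X p))"
proof -
  have zz: "\<And>w. z * (cnj z * w) = w" using assms by (metis mult.assoc mult.commute mult_1)
  show ?thesis unfolding col_givens_l[OF assms(2)] quad_form_lincomb by (simp add: algebra_simps zz)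
qed

lemma exists_pos_neg_of_sum_0:
  fixes f :: "'a::finite \<Rightarrow> real"
  assumes sum0: "(\<Sum>j\<in>UNIV. f j) = 0" and j0: "f j0 \<noteq> 0"
  shows "\<exists>p l. f p > 0 \<and> f l < 0"
proof -
  have "\<exists>p. f p > 0" if sum0: "(\<Sum>j\<in>UNIV. f j) = 0" and j0: "f j0 \<noteq> 0" for f :: "'a \<Rightarrow> real"
  proof (rule ccontr)
    assume "\<nexists>p. f p > 0"
    then have "\<forall>j\<in>UNIV. 0 \<le> - f j" by (simp add: not_less)
    moreover have "(\<Sum>j\<in>UNIV. - f j) = 0" using sum0 by (simp add: sum_negf)
    ultimately show False using sum_nonneg_eq_0_iff[of UNIV "\<lambda>j. - f j"] j0 by simp
  qed
  from this[OF sum0 j0] this[of "\<lambda>j. - f j"] show ?thesis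
    using sum0 j0 by (simp add: sum_negf)
qed

lemma exists_phase_cancel: "\<exists>z. cnj z * z = 1 \<and> z * \<beta> + cnj z * cnj \<beta> = 0"
proof (cases "\<beta> = 0")
  case True
  then show ?thesis by (intro exI[of _ 1]) simp
next
  case False
  define z where "z = \<i> * cnj \<beta> / complex_of_real (cmod \<beta>)"
  have \<beta>\<beta>: "cnj \<beta> * \<beta> = complex_of_real (cmod \<beta> * cmod \<beta>)"
    using complex_norm_square[of \<beta>] by (simp add: power2_eq_square mult.commute)
  have "cnj z * z = (cnj \<beta> * \<beta>) / complex_of_real (cmod \<beta> * cmod \<beta>)"
    unfolding z_def by (simp add: field_simps)
  moreover have "z * \<beta> + cnj z * cnj \<beta> = (\<i> * (cnj \<beta> * \<beta>) - \<i> * (cnj \<beta> * \<beta>)) / complex_of_real (cmod \<beta>)"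
    unfolding z_def by (simp add: field_simps)
  ultimately show ?thesis using \<beta>\<beta> False by (intro exI[of _ z]) simp
qed

text \<open>One Jacobi-type step: a rotation in the plane of a column with positive and one with negative
  \<open>F\<close>-value kills the first, by the intermediate value theorem, while the phase \<open>z\<close> keeps the
  \<open>G\<close>-diagonal zero.\<close>
lemma givens_step:
  assumes hF: "hermitian F" and hG: "hermitian G" and X: "unitary_mat X"
    and G0: "\<forall>j. quad_form G (col X j) = 0"
    and p: "Re (quad_form F (col X p)) > 0" and l: "Re (quad_form F (col X l)) < 0"
  shows "\<exists>X'. unitary_mat X' \<and> (\<forall>j. quad_form G (col X' j) = 0) \<and> quad_form F (col X' p) = 0
           \<and> (\<forall>j. j \<noteq> p \<longrightarrow> j \<noteq> l \<longrightarrow> col X' j = col X j)"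
proof -
  have pl: "p \<noteq> l" using p l by auto
  define r where "r j = Re (quad_form F (col X j))" for j
  have rp: "r p > 0" and rl: "r l < 0" using p l unfolding r_def .
  have rF: "\<And>j. quad_form F (col X j) = r j" unfolding r_def by (rule hermitian_quad_form_real[OF hF])
  define \<beta> where "\<beta> = sesq_form G (col X p) (col X l)"
  obtain z where z: "cnj z * z = 1" and z\<beta>: "z * \<beta> + cnj z * cnj \<beta> = 0"
    using exists_phase_cancel by blast
  define \<gamma> where "\<gamma> = Re (z * sesq_form F (col X p) (col X l))"
  define g where "g \<theta> = cos \<theta> * cos \<theta> * r p + sin \<theta> * sin \<theta> * r l + 2 * cos \<theta> * sin \<theta> * \<gamma>" for \<theta>
  have "continuous_on {0..pi/2} g" unfolding g_def by (intro continuous_intros)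
  moreover have "g 0 = r p" and "g (pi/2) = r l" unfolding g_def by simp_all
  ultimately obtain \<theta> where g\<theta>: "g \<theta> = 0"
    using IVT2'[of g "pi/2" 0 0] rp rl by fastforce
  define X' where "X' = givens X p l \<theta> z"
  have "z * sesq_form F (col X p) (col X l) + cnj z * sesq_form F (col X l) (col X p) = 2 * \<gamma>"
    unfolding \<gamma>_def hermitian_sesq_form_swap[OF hF, of "col X l"]
    using complex_add_cnj[of "z * sesq_form F (col X p) (col X l)"] by simp
  then have "quad_form F (col X' p) = g \<theta>"
    unfolding X'_def quad_form_givens_p[OF z] rF g_def by simp
  moreover have "quad_form G (col X' j) = 0" for j
    using G0 z\<beta> pl hermitian_sesq_form_swap[OF hG, of "col X l"]
    unfolding X'_def \<beta>_def
    by (cases "j = p"; cases "j = l")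
      (simp_all add: quad_form_givens_p[OF z] quad_form_givens_l[OF z pl] col_givens_other)
  ultimately show ?thesis
    using unitary_givens[OF X pl z] g\<theta> unfolding X'_def
    by (intro exI[of _ "givens X p l \<theta> z"]) (simp add: col_givens_other)
qed

lemma zero_diagonal_simultaneous:
  assumes hF: "hermitian F" and hG: "hermitian G" and trF: "trace_mat F = 0"
  shows "unitary_mat X \<Longrightarrow> \<forall>j. quad_form G (col X j) = 0 \<Longrightarrow>
    \<exists>X'. unitary_mat X' \<and> (\<forall>j. quad_form G (col X' j) = 0) \<and> (\<forall>j. quad_form F (col X' j) = 0)"
proof (induction "card {j. quad_form F (col X j) \<noteq> 0}" arbitrary: X rule: less_induct)
  case less
  show ?case
  proof (cases "\<forall>j. quad_form F (col X j) = 0")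
    case True
    then show ?thesis using less.prems by blast
  next
    case False
    then obtain j0 where j0: "quad_form F (col X j0) \<noteq> 0" by blast
    define r where "r j = Re (quad_form F (col X j))" for j
    have rF: "\<And>j. quad_form F (col X j) = r j" unfolding r_def by (rule hermitian_quad_form_real[OF hF])
    have "complex_of_real (\<Sum>j\<in>UNIV. r j) = 0"
      using sum_quad_form_cols[OF less.prems(1), of F] trF by (simp add: rF)
    then obtain p l where p: "r p > 0" and l: "r l < 0"
      using exists_pos_neg_of_sum_0[of r j0] j0 rF by (auto simp del: of_real_sum)
    obtain X' where X': "unitary_mat X'" "\<forall>j. quad_form G (col X' j) = 0" "quad_form F (col X' p) = 0"
      and same: "\<forall>j. j \<noteq> p \<longrightarrow> j \<noteq> l \<longrightarrow> col X' j = col X j"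
      using givens_step[OF hF hG less.prems p[unfolded r_def] l[unfolded r_def]] by blast
    have "{j. quad_form F (col X' j) \<noteq> 0} \<subseteq> {j. quad_form F (col X j) \<noteq> 0} - {p}"
      using X'(3) same l rF by fastforce
    moreover have "p \<in> {j. quad_form F (col X j) \<noteq> 0}" using p rF by auto
    ultimately have "card {j. quad_form F (col X' j) \<noteq> 0} < card {j. quad_form F (col X j) \<noteq> 0}"
      by (meson card_Diff1_less card_mono finite le_less_trans)
    then show ?thesis using less.hyps X'(1,2) by blast
  qed
qed

theorem zero_diagonal_basis:
  assumes "trace_mat M = 0"
  shows "\<exists>X. unitary_mat X \<and> (\<forall>j. quad_form M (col X j) = 0)"
proof -
  define H where "H a a' = (M a a' + cnj (M a' a)) / 2" for a a'
  define J where "J a a' = (M a a' - cnj (M a' a)) / (2 * \<i>)" for a a'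
  have hH: "hermitian H" and hJ: "hermitian J" and h0: "hermitian (\<lambda>a a'. 0)"
    unfolding hermitian_def H_def J_def by (simp_all add: field_simps add.commute)
  have tr: "(\<Sum>a\<in>UNIV. M a a) = 0" and trc: "(\<Sum>a\<in>UNIV. cnj (M a a)) = 0"
    using assms unfolding trace_mat_def by (simp_all flip: cnj_sum)
  have trH: "trace_mat H = 0"
    unfolding trace_mat_def H_def using tr trc by (simp add: sum_divide_distrib[symmetric] sum.distrib)
  have trJ: "trace_mat J = 0"
    unfolding trace_mat_def J_def using tr trc
    by (simp only: sum_divide_distrib[symmetric] sum_subtractf) simp
  obtain X1 where X1: "unitary_mat X1" "\<forall>j. quad_form J (col X1 j) = 0"
    using zero_diagonal_simultaneous[OF hJ h0 trJ unitary_mat_id] by (auto simp: quad_form_def sesq_form_def)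
  obtain X where X: "unitary_mat X" "\<forall>j. quad_form J (col X j) = 0" "\<forall>j. quad_form H (col X j) = 0"
    using zero_diagonal_simultaneous[OF hH hJ trH X1] by blast
  have "M = (\<lambda>a a'. H a a' + \<i> * J a a')" unfolding H_def J_def by (auto simp: field_simps)
  then have "\<forall>j. quad_form M (col X j) = 0"
    using X(2,3) by (simp add: quad_form_add_mat quad_form_scale_mat)
  then show ?thesis using X(1) by blast
qed

section \<open>Branches of a local measurement\<close>

text \<open>\<open>branch_state X f a\<close> is \<open>(\<langle>x| \<otimes> 1) f\<close> for the column \<open>x\<close> of \<open>X\<close> at \<open>a\<close>: the unnormalised state
  of \<open>B\<close> after outcome \<open>a\<close> of measuring \<open>A\<close> in that basis. \<open>reduced_cross f g\<close> is the partial trace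
  over \<open>B\<close> of \<open>|g\<rangle>\<langle>f|\<close>.\<close>
definition branch_state :: "('a::finite \<Rightarrow> 'a \<Rightarrow> complex) \<Rightarrow> ('a \<times> 'b \<Rightarrow> complex) \<Rightarrow> 'a \<Rightarrow> 'b \<Rightarrow> complex" where
  "branch_state X f a = (\<lambda>b. \<Sum>a'\<in>UNIV. cnj (X a' a) * f (a', b))"

definition reduced_cross ::
  "('a::finite \<times> 'b::finite \<Rightarrow> complex) \<Rightarrow> ('a \<times> 'b \<Rightarrow> complex) \<Rightarrow> 'a \<Rightarrow> 'a \<Rightarrow> complex" where
  "reduced_cross f g = (\<lambda>a1 a2. \<Sum>b\<in>UNIV. cnj (f (a2, b)) * g (a1, b))"

lemma ip_branch_state:
  "ip (branch_state X f a) (branch_state X g a) = quad_form (reduced_cross f g) (col X a)"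
proof -
  have "ip (branch_state X f a) (branch_state X g a)
      = (\<Sum>b\<in>UNIV. \<Sum>a1\<in>UNIV. \<Sum>a2\<in>UNIV. cnj (X a1 a) * (cnj (f (a2, b)) * g (a1, b)) * X a2 a)"
    unfolding ip_def branch_state_def by (simp add: cnj_sum sum_distrib_left sum_distrib_right algebra_simps)
  also have "\<dots> = (\<Sum>a1\<in>UNIV. \<Sum>b\<in>UNIV. \<Sum>a2\<in>UNIV. cnj (X a1 a) * (cnj (f (a2, b)) * g (a1, b)) * X a2 a)"
    by (rule sum.swap)
  also have "\<dots> = (\<Sum>a1\<in>UNIV. \<Sum>a2\<in>UNIV. \<Sum>b\<in>UNIV. cnj (X a1 a) * (cnj (f (a2, b)) * g (a1, b)) * X a2 a)"
    by (rule sum.cong[OF refl], rule sum.swap)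
  also have "\<dots> = quad_form (reduced_cross f g) (col X a)"
    unfolding quad_form_def sesq_form_def reduced_cross_def col_def
    by (simp add: sum_distrib_left sum_distrib_right)
  finally show ?thesis .
qed

lemma trace_reduced_cross: "trace_mat (reduced_cross f g) = ip f g"
  unfolding trace_mat_def reduced_cross_def ip_prod_type by simp

lemma sum_ip_branch_state:
  assumes "unitary_mat X"
  shows "(\<Sum>a\<in>UNIV. ip (branch_state X f a) (branch_state X g a)) = ip f g"
  unfolding ip_branch_state sum_quad_form_cols[OF assms] trace_reduced_cross ..

lemma branch_state_lincomb:
  "branch_state X (\<lambda>p. \<alpha> * f p + \<beta> * g p) a = (\<lambda>b. \<alpha> * branch_state X f a b + \<beta> * branch_state X g a b)"
  unfolding branch_state_def by (simp add: sum.distrib sum_distrib_left algebra_simps)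

text \<open>With \<open>w = \<psi> - \<rho>\<phi>\<close> and \<open>\<xi>\<close> the part of \<open>\<phi>\<close> orthogonal to \<open>w\<close>, the pair becomes
  \<open>\<phi> = \<xi> + \<alpha>w\<close>, \<open>\<psi> = \<rho>\<xi> + \<beta>w\<close>; the coefficient constraints come from \<open>c \<le> \<rho> \<le> 1\<close>.\<close>
lemma pair_decomposition:
  fixes \<phi> \<psi> :: "'x::finite \<Rightarrow> complex" and c \<rho> :: real
  assumes \<phi>: "ip \<phi> \<phi> = 1" and \<psi>: "ip \<psi> \<psi> = 1" and \<phi>\<psi>: "ip \<phi> \<psi> = c"
    and c: "0 \<le> c" "c \<le> \<rho>" and \<rho>: "\<rho> \<le> 1"
  shows "\<exists>(\<xi>::'x \<Rightarrow> complex) (w::'x \<Rightarrow> complex) (\<alpha>::real) (\<beta>::real).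
           ip \<xi> w = 0 \<and> \<alpha> \<le> 0 \<and> \<beta> - \<rho> * \<alpha> = 1 \<and> \<rho>\<^sup>2 * \<alpha>\<^sup>2 \<le> \<beta>\<^sup>2 \<and>
           \<phi> = (\<lambda>x. \<xi> x + \<alpha> * w x) \<and> \<psi> = (\<lambda>x. \<rho> * \<xi> x + \<beta> * w x)"
proof -
  have \<psi>\<phi>: "ip \<psi> \<phi> = c" using \<phi>\<psi> ip_cnj_swap[of \<psi> \<phi>] by simp
  define w where "w = (\<lambda>x. 1 * \<psi> x + complex_of_real (- \<rho>) * \<phi> x)"
  define n where "n = 1 - 2 * \<rho> * c + \<rho>\<^sup>2"
  have ww: "ip w w = n"
    unfolding w_def ip_lincomb_left ip_lincomb_right \<phi> \<psi> \<phi>\<psi> \<psi>\<phi> n_def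
    by (simp add: algebra_simps power2_eq_square)
  have \<phi>w: "ip \<phi> w = c - \<rho>"
    unfolding w_def ip_lincomb_right \<phi> \<phi>\<psi> by simp
  have "c\<^sup>2 \<le> 1" using c \<rho> by (simp add: power_le_one)
  then have n: "(\<rho> - c)\<^sup>2 \<le> n" unfolding n_def by (simp add: power2_eq_square algebra_simps)
  then have n0: "n \<ge> 0" by (smt (verit) zero_le_power2)
  define \<alpha> where "\<alpha> = (if n = 0 then 0 else (c - \<rho>) / n)"
  define \<beta> where "\<beta> = 1 + \<rho> * \<alpha>"
  define \<xi> where "\<xi> = (\<lambda>x. 1 * \<phi> x + complex_of_real (- \<alpha>) * w x)"
  have "\<alpha> \<le> 0" unfolding \<alpha>_def using c n0 by (simp add: divide_nonpos_nonneg)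
  moreover have "\<rho>\<^sup>2 * \<alpha>\<^sup>2 \<le> \<beta>\<^sup>2"
  proof (cases "n = 0")
    case False
    have "\<beta>\<^sup>2 - \<rho>\<^sup>2 * \<alpha>\<^sup>2 = 1 + 2 * \<rho> * \<alpha>" unfolding \<beta>_def by (simp add: power2_eq_square algebra_simps)
    also have "\<dots> = (1 - \<rho>\<^sup>2) / n"
      using False unfolding \<alpha>_def n_def by (simp add: field_simps power2_eq_square)
    also have "\<dots> \<ge> 0" using \<rho> c n0 by (simp add: power_le_one)
    finally show ?thesis by simp
  qed (simp add: \<alpha>_def \<beta>_def)
  moreover have "ip \<xi> w = 0"
  proof (cases "n = 0")
    case True
    then have "c = \<rho>" using n by simp
    then show ?thesis unfolding \<xi>_def ip_lincomb_left \<phi>w ww \<alpha>_def using True by simp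
  next
    case False
    then show ?thesis unfolding \<xi>_def ip_lincomb_left \<phi>w ww \<alpha>_def by (simp add: field_simps)
  qed
  moreover have "\<phi> = (\<lambda>x. \<xi> x + \<alpha> * w x)" and "\<psi> = (\<lambda>x. \<rho> * \<xi> x + \<beta> * w x)"
    unfolding \<xi>_def w_def \<beta>_def by (auto simp: algebra_simps)
  moreover have "\<beta> - \<rho> * \<alpha> = 1" unfolding \<beta>_def by simp
  ultimately show ?thesis by blast
qed

definition branch_bounds :: "real \<Rightarrow> ('x::finite \<Rightarrow> complex) \<Rightarrow> ('x \<Rightarrow> complex) \<Rightarrow> bool" where
  "branch_bounds \<rho> u v \<longleftrightarrow>
     ip u v \<in> \<real> \<and> Re (ip u v) \<le> \<rho> * Re (ip u u) \<and> \<rho>\<^sup>2 * Re (ip u u) \<le> Re (ip v v)"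

lemma branch_bounds_lincomb:
  fixes A B :: "'x::finite \<Rightarrow> complex" and \<rho> \<alpha> \<beta> :: real
  assumes AB: "ip A B = 0" and \<alpha>: "\<alpha> \<le> 0" and \<beta>: "\<beta> - \<rho> * \<alpha> = 1" and \<beta>\<alpha>: "\<rho>\<^sup>2 * \<alpha>\<^sup>2 \<le> \<beta>\<^sup>2"
  shows "branch_bounds \<rho> (\<lambda>x. A x + \<alpha> * B x) (\<lambda>x. \<rho> * A x + \<beta> * B x)"
proof -
  have BA: "ip B A = 0" using AB ip_cnj_swap[of B A] by simp
  define a b where "a = Re (ip A A)" and "b = Re (ip B B)"
  have AA: "ip A A = a" and BB: "ip B B = b" unfolding a_def b_def by (rule ip_self_real)+
  have b: "b \<ge> 0" unfolding b_def by (rule ip_self_nonneg)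
  define u v where "u = (\<lambda>x. 1 * A x + complex_of_real \<alpha> * B x)" and "v = (\<lambda>x. \<rho> * A x + \<beta> * B x)"
  have uv: "ip u v = \<rho> * a + \<alpha> * \<beta> * b" and uu: "ip u u = a + \<alpha>\<^sup>2 * b"
    and vv: "ip v v = \<rho>\<^sup>2 * a + \<beta>\<^sup>2 * b"
    unfolding u_def v_def ip_lincomb_left ip_lincomb_right AB BA AA BB by (simp_all add: power2_eq_square)
  have "\<rho> * (a + \<alpha>\<^sup>2 * b) - (\<rho> * a + \<alpha> * \<beta> * b) = - \<alpha> * b"
    using \<beta> by (simp add: power2_eq_square algebra_simps)
  then have "Re (ip u v) \<le> \<rho> * Re (ip u u)"
    unfolding uv uu using mult_nonpos_nonneg[OF \<alpha> b] by simp
  moreover have "(\<rho>\<^sup>2 * a + \<beta>\<^sup>2 * b) - \<rho>\<^sup>2 * (a + \<alpha>\<^sup>2 * b) = (\<beta>\<^sup>2 - \<rho>\<^sup>2 * \<alpha>\<^sup>2) * b"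
    by (simp add: algebra_simps)
  moreover have "(\<beta>\<^sup>2 - \<rho>\<^sup>2 * \<alpha>\<^sup>2) * b \<ge> 0" using \<beta>\<alpha> b by simp
  ultimately show ?thesis
    unfolding branch_bounds_def using uv uu vv by (simp add: u_def v_def)
qed

text \<open>A basis in which \<open>reduced_cross \<xi> w\<close> has zero diagonal keeps the two components of
  \<open>pair_decomposition\<close> orthogonal in every branch.\<close>
lemma exists_basis_with_bounded_branches:
  fixes \<phi> \<psi> :: "'a::finite \<times> 'b::finite \<Rightarrow> complex" and c \<rho> :: real
  assumes "ip \<phi> \<phi> = 1" and "ip \<psi> \<psi> = 1" and "ip \<phi> \<psi> = c"
    and "0 \<le> c" and "c \<le> \<rho>" and "\<rho> \<le> 1"
  shows "\<exists>X. unitary_mat X \<and> (\<forall>a. branch_bounds \<rho> (branch_state X \<phi> a) (branch_state X \<psi> a))"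
proof -
  obtain \<xi> w :: "'a \<times> 'b \<Rightarrow> complex" and \<alpha> \<beta> :: real where \<xi>w: "ip \<xi> w = 0"
    and \<alpha>\<beta>: "\<alpha> \<le> 0" "\<beta> - \<rho> * \<alpha> = 1" "\<rho>\<^sup>2 * \<alpha>\<^sup>2 \<le> \<beta>\<^sup>2"
    and \<phi>: "\<phi> = (\<lambda>x. \<xi> x + \<alpha> * w x)" and \<psi>: "\<psi> = (\<lambda>x. \<rho> * \<xi> x + \<beta> * w x)"
    using pair_decomposition[OF assms] by blast
  obtain X where X: "unitary_mat X" and diag: "\<forall>a. quad_form (reduced_cross \<xi> w) (col X a) = 0"
    using zero_diagonal_basis[of "reduced_cross \<xi> w"] \<xi>w by (auto simp: trace_reduced_cross)
  have orth: "ip (branch_state X \<xi> a) (branch_state X w a) = 0" for a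
    using diag by (simp add: ip_branch_state)
  have "branch_state X \<phi> a = (\<lambda>b. branch_state X \<xi> a b + \<alpha> * branch_state X w a b)"
    and "branch_state X \<psi> a = (\<lambda>b. \<rho> * branch_state X \<xi> a b + \<beta> * branch_state X w a b)" for a
    using branch_state_lincomb[of X 1 \<xi> \<alpha> w a] branch_state_lincomb[of X \<rho> \<xi> \<beta> w a]
    unfolding \<phi> \<psi> by simp_all
  then show ?thesis
    using X branch_bounds_lincomb[OF orth \<alpha>\<beta>] by (intro exI[of _ X]) simp
qed

text \<open>Diverting the same fraction of every branch with positive overlap \<open>k j\<close>, and nothing of the
  others, removes exactly the total overlap \<open>\<Sum>j. k j\<close>.\<close>
lemma exists_overlap_cancelling_weights:
  fixes k :: "'a::finite \<Rightarrow> real"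
  assumes pos: "(\<Sum>j\<in>UNIV. k j) > 0"
  shows "\<exists>w. (\<forall>j. 0 \<le> w j \<and> w j \<le> 1) \<and> (\<forall>j. 0 < w j \<longleftrightarrow> 0 < k j) \<and> (\<Sum>j\<in>UNIV. (1 - w j) * k j) = 0"
proof -
  define P where "P = {j. k j > 0}"
  have "sum k (UNIV - P) \<le> 0" by (rule sum_nonpos) (auto simp: P_def)
  then have le: "(\<Sum>j\<in>UNIV. k j) \<le> sum k P" by (simp add: sum.subset_diff[of P UNIV])
  define \<mu> where "\<mu> = (\<Sum>j\<in>UNIV. k j) / sum k P"
  have \<mu>: "0 < \<mu>" "\<mu> \<le> 1" and \<mu>P: "\<mu> * sum k P = (\<Sum>j\<in>UNIV. k j)"
    unfolding \<mu>_def using pos le by auto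
  define w where "w j = (if j \<in> P then \<mu> else 0)" for j
  have "(\<Sum>j\<in>UNIV. w j * k j) = (\<Sum>j\<in>UNIV. if j \<in> P then \<mu> * k j else 0)"
    unfolding w_def by (rule sum.cong) auto
  also have "\<dots> = \<mu> * sum k P"
    by (simp add: sum.If_cases sum_distrib_left)
  finally have "(\<Sum>j\<in>UNIV. (1 - w j) * k j) = 0"
    using \<mu>P by (simp add: algebra_simps sum_subtractf)
  moreover have "\<forall>j. 0 \<le> w j \<and> w j \<le> 1" and "\<forall>j. 0 < w j \<longleftrightarrow> 0 < k j"
    using \<mu> unfolding w_def P_def by auto
  ultimately show ?thesis by blast
qed

lemma exists_branch_weights:
  fixes \<phi> \<psi> :: "'a::finite \<times> 'b::finite \<Rightarrow> complex" and X :: "'a \<Rightarrow> 'a \<Rightarrow> complex"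
    and k :: "'a \<Rightarrow> complex" and c :: real
  defines "k \<equiv> \<lambda>a. ip (branch_state X \<phi> a) (branch_state X \<psi> a)"
  assumes X: "unitary_mat X" and c: "ip \<phi> \<psi> = c" "0 < c" and real: "\<forall>a. k a \<in> \<real>"
  shows "\<exists>w::'a \<Rightarrow> real. (\<forall>a. 0 \<le> w a \<and> w a \<le> 1) \<and> (\<forall>a. 0 < w a \<longrightarrow> 0 < Re (k a)) \<and>
    (\<Sum>a\<in>UNIV. (1 - w a) * k a) = 0 \<and> ((\<exists>i1 i2::'a. i1 \<noteq> i2) \<or> (\<forall>a. w a = 1))"
proof -
  have k: "k a = Re (k a)" for a using real by (simp add: complex_is_Real_iff)
  have "(\<Sum>a\<in>UNIV. k a) = c" using sum_ip_branch_state[OF X, of \<phi> \<psi>] c unfolding k_def by simp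
  then have sum_k: "(\<Sum>a\<in>UNIV. Re (k a)) = c" by (metis Re_complex_of_real Re_sum)
  then obtain w where w: "\<forall>a. 0 \<le> w a \<and> w a \<le> 1" and wk: "\<forall>a. 0 < w a \<longleftrightarrow> 0 < Re (k a)"
    and cancel: "(\<Sum>a\<in>UNIV. (1 - w a) * Re (k a)) = 0"
    using exists_overlap_cancelling_weights[of "\<lambda>a. Re (k a)"] c(2) by auto
  have "(\<exists>i1 i2::'a. i1 \<noteq> i2) \<or> (\<forall>a. w a = 1)"
  proof (cases "\<exists>i1 i2::'a. i1 \<noteq> i2")
    case False
    have "w a = 1" for a
    proof -
      have UNIV: "UNIV = {a}" using False by auto
      have "Re (k a) = c" and "(1 - w a) * Re (k a) = 0" using sum_k cancel unfolding UNIV by simp_all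
      then show ?thesis using c(2) by simp
    qed
    then show ?thesis by blast
  qed blast
  moreover have "(\<Sum>a\<in>UNIV. (1 - w a) * k a) = 0"
    using arg_cong[OF cancel, of complex_of_real] by (simp flip: k)
  ultimately show ?thesis using w wk by blast
qed

section \<open>Controlled rotations of the auxiliary system\<close>

definition unitary_fin :: "nat \<Rightarrow> (nat \<Rightarrow> nat \<Rightarrow> complex) \<Rightarrow> bool" where
  "unitary_fin d R \<longleftrightarrow>
     (\<forall>k1<d. \<forall>k2<d. (\<Sum>k<d. cnj (R k k1) * R k k2) = (if k1 = k2 then 1 else 0))"

definition plane_rotation :: "nat \<Rightarrow> real \<Rightarrow> real \<Rightarrow> nat \<Rightarrow> nat \<Rightarrow> complex" where
  "plane_rotation \<kappa> c s k k' =
     (if k' = 0 then (if k = 0 then of_real c else if k = \<kappa> then of_real s else 0)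
      else if k' = \<kappa> then (if k = 0 then - of_real s else if k = \<kappa> then of_real c else 0)
      else if k = k' then 1 else 0)"

lemma unitary_plane_rotation:
  assumes \<kappa>: "0 < \<kappa>" "\<kappa> < d" and cs: "c\<^sup>2 + s\<^sup>2 = 1"
  shows "unitary_fin d (plane_rotation \<kappa> c s)"
  unfolding unitary_fin_def
proof (intro allI impI)
  fix k1 k2 assume k1: "k1 < d" and k2: "k2 < d"
  let ?R = "plane_rotation \<kappa> c s"
  have "(\<Sum>k\<in>{..<d} - {0, \<kappa>}. cnj (?R k k1) * ?R k k2)
      = (\<Sum>k\<in>{..<d} - {0, \<kappa>}. if k = k1 then (if k1 = k2 \<and> k1 \<noteq> 0 \<and> k1 \<noteq> \<kappa> then 1 else 0) else 0)"
    by (rule sum.cong) (auto simp: plane_rotation_def)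
  also have "\<dots> = (if k1 = k2 \<and> k1 \<noteq> 0 \<and> k1 \<noteq> \<kappa> then 1 else 0)"
    using k1 by (simp add: sum.delta)
  finally have rest: "(\<Sum>k\<in>{..<d} - {0, \<kappa>}. cnj (?R k k1) * ?R k k2) = \<dots>" .
  have csc: "complex_of_real c * c + complex_of_real s * s = 1"
    using cs by (metis of_real_1 of_real_add of_real_mult power2_eq_square)
  have "(\<Sum>k<d. cnj (?R k k1) * ?R k k2)
      = cnj (?R 0 k1) * ?R 0 k2 + cnj (?R \<kappa> k1) * ?R \<kappa> k2 + (\<Sum>k\<in>{..<d} - {0, \<kappa>}. cnj (?R k k1) * ?R k k2)"
    using \<kappa> by (intro sum_split_pair) auto
  also have "\<dots> = (if k1 = k2 then 1 else 0)"
    unfolding rest using \<kappa> csc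
    by (cases "k1 = 0"; cases "k1 = \<kappa>"; cases "k2 = 0"; cases "k2 = \<kappa>")
      (simp_all add: plane_rotation_def algebra_simps)
  finally show "(\<Sum>k<d. cnj (?R k k1) * ?R k k2) = (if k1 = k2 then 1 else 0)" .
qed

lemma plane_rotation_trivial: "0 < \<kappa> \<Longrightarrow> plane_rotation \<kappa> 1 0 = (\<lambda>k k'. if k = k' then 1 else 0)"
  unfolding plane_rotation_def by (intro ext) auto

lemma unitary_fin_id: "unitary_fin d (\<lambda>k k'. if k = k' then 1 else 0)"
proof -
  have "(\<Sum>k<d. cnj (if k = k1 then 1 else 0) * (if k = k2 then 1 else 0))
      = (\<Sum>k<d. if k = k1 then (if k1 = k2 then 1 else 0) else 0 :: complex)" for k1 k2
    by (rule sum.cong) auto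
  then show ?thesis unfolding unitary_fin_def by simp
qed

lemma unitary_SA_controlled:
  fixes R :: "'a::finite \<Rightarrow> nat \<Rightarrow> nat \<Rightarrow> complex"
  assumes R: "\<forall>a. unitary_fin d (R a)" and X: "unitary_mat X"
  shows "unitary_SA d (\<lambda>(k, a) (k', a'). R a k k' * cnj (X a' a))"
  unfolding unitary_SA_def idxSA_def
proof (intro ballI)
  let ?U = "\<lambda>(k, a) (k', a'). R a k k' * cnj (X a' a)"
  fix x y assume "x \<in> {..<d} \<times> (UNIV :: 'a set)" and "y \<in> {..<d} \<times> (UNIV :: 'a set)"
  then obtain k1 a1 k2 a2 where xy: "x = (k1, a1)" "y = (k2, a2)" and k: "k1 < d" "k2 < d" by auto
  have "(\<Sum>z\<in>{..<d} \<times> UNIV. cnj (?U z x) * ?U z y)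
      = (\<Sum>a\<in>UNIV. (X a1 a * cnj (X a2 a)) * (\<Sum>k<d. cnj (R a k k1) * R a k k2))"
    unfolding xy sum.cartesian_product' by (subst sum.swap) (simp add: sum_distrib_left algebra_simps)
  also have "\<dots> = (\<Sum>a\<in>UNIV. X a1 a * cnj (X a2 a)) * (if k1 = k2 then 1 else 0)"
    using R k unfolding unitary_fin_def by (simp add: sum_distrib_right)
  also have "\<dots> = (if x = y then 1 else 0)"
    using X unfolding unitary_mat_def xy by simp
  finally show "(\<Sum>z\<in>{..<d} \<times> UNIV. cnj (?U z x) * ?U z y) = (if x = y then 1 else 0)" .
qed

lemma apply_SA_controlled:
  fixes R :: "'a::finite \<Rightarrow> nat \<Rightarrow> nat \<Rightarrow> complex" and f :: "'a \<times> 'b \<Rightarrow> complex"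
  assumes "0 < d"
  shows "apply_SA d (\<lambda>(k, a) (k', a'). R a k k' * cnj (X a' a))
           (\<lambda>(k', a', b'). (if k' = 0 then 1 else 0) * f (a', b')) (k, a, b)
         = R a k 0 * branch_state X f a b"
proof -
  have "apply_SA d (\<lambda>(k, a) (k', a'). R a k k' * cnj (X a' a))
           (\<lambda>(k', a', b'). (if k' = 0 then 1 else 0) * f (a', b')) (k, a, b)
     = (\<Sum>k'<d. \<Sum>a'\<in>UNIV. R a k k' * cnj (X a' a) * ((if k' = 0 then 1 else 0) * f (a', b)))"
    unfolding apply_SA_def idxSA_def sum.cartesian_product' by simp
  also have "\<dots> = (\<Sum>k'<d. if k' = 0 then (\<Sum>a'\<in>UNIV. R a k 0 * cnj (X a' a) * f (a', b)) else 0)"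
    by (rule sum.cong) auto
  also have "\<dots> = R a k 0 * branch_state X f a b"
    using assms by (simp add: branch_state_def sum_distrib_left algebra_simps)
  finally show ?thesis .
qed

text \<open>\<open>U\<close> measures \<open>A\<close> in the basis of columns of \<open>X\<close> and, controlled on the outcome \<open>a\<close>,
  rotates the fraction \<open>w a\<close> of \<open>|0\<rangle>\<^sub>S\<close> into the slot \<open>|k\<rangle>\<^sub>S\<close> with \<open>h (k - 1) = a\<close>.\<close>
lemma exists_controlled_split:
  fixes X :: "'a::finite \<Rightarrow> 'a \<Rightarrow> complex" and w :: "'a \<Rightarrow> real"
  assumes X: "unitary_mat X" and w: "\<forall>a. 0 \<le> w a \<and> w a \<le> 1"
    and h: "bij_betw h {0..<n} {a. 0 < w a}"
  shows "\<exists>U. unitary_SA (Suc n) U \<and>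
    (\<forall>(f :: 'a \<times> 'b \<Rightarrow> complex) k a b. k \<le> n \<longrightarrow>
       apply_SA (Suc n) U (\<lambda>(k', a', b'). (if k' = 0 then 1 else 0) * f (a', b')) (k, a, b) =
       (if k = 0 then sqrt (1 - w a) else if a = h (k - 1) then sqrt (w a) else 0) * branch_state X f a b)"
proof -
  define \<iota> where "\<iota> a = Suc (inv_into {0..<n} h a)" for a
  define R where "R a = plane_rotation (\<iota> a) (sqrt (1 - w a)) (sqrt (w a))" for a
  have \<iota>: "0 < \<iota> a \<and> \<iota> a < Suc n" if "0 < w a" for a
    using bij_betw_apply[OF bij_betw_inv_into[OF h]] that unfolding \<iota>_def by auto
  have R: "unitary_fin (Suc n) (R a)" for a
  proof (cases "0 < w a")
    case True
    then show ?thesis unfolding R_def using \<iota>[OF True] w by (intro unitary_plane_rotation) auto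
  next
    case False
    then have "w a = 0" using w by (simp add: order_less_le)
    then show ?thesis unfolding R_def \<iota>_def by (simp add: plane_rotation_trivial unitary_fin_id)
  qed
  moreover have col0:
    "R a k 0 = (if k = 0 then sqrt (1 - w a) else if a = h (k - 1) then sqrt (w a) else 0)"
    if "k \<le> n" for a k
  proof (cases "0 < w a")
    case True
    have "\<iota> a = k \<longleftrightarrow> 0 < k \<and> a = h (k - 1)"
      using h True \<open>k \<le> n\<close> bij_betw_inv_into_right[OF h] bij_betw_inv_into_left[OF h]
      unfolding \<iota>_def by (cases k) fastforce+
    then show ?thesis unfolding R_def plane_rotation_def by auto
  next
    case False
    then have "w a = 0" using w by (simp add: order_less_le)
    then show ?thesis unfolding R_def plane_rotation_def \<iota>_def by auto
  qed
  show ?thesis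
  proof (intro exI[of _ "\<lambda>(k, a) (k', a'). R a k k' * cnj (X a' a)"] conjI allI impI)
    show "unitary_SA (Suc n) (\<lambda>(k, a) (k', a'). R a k k' * cnj (X a' a))"
      using R X by (simp add: unitary_SA_controlled)
  qed (simp only: apply_SA_controlled[of "Suc n"] col0 zero_less_Suc)
qed

section \<open>Assembling the splitting\<close>

lemma ipS_slot_vectors:
  assumes "m \<le> i" "i < d + m" "m \<le> j" "j < d + m"
  shows "ipS d (\<lambda>k. if k + m = i then 1 else 0) (\<lambda>k. if k + m = j then 1 else 0)
         = (if i = j then 1 else 0)"
proof -
  have "ipS d (\<lambda>k. if k + m = i then 1 else 0) (\<lambda>k. if k + m = j then 1 else 0)
      = (\<Sum>k<d. if k = i - m then (if i = j then 1 else 0) else 0)"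
    unfolding ipS_def using assms by (intro sum.cong) auto
  then show ?thesis using assms by auto
qed

lemma ipS_slot_zero: "ipS (Suc n) (\<lambda>k. if k = 0 then 1 else 0) (\<lambda>k. if k = 0 then 1 else 0) = 1"
  using ipS_slot_vectors[of 0 0 "Suc n" 0] by simp

lemma ipS_slots_orthonormal:
  assumes "m \<le> 1"
  shows "\<forall>i\<in>{1..n + m}. \<forall>j\<in>{1..n + m}.
    ipS (Suc n) (\<lambda>k. if k + m = i then 1 else 0) (\<lambda>k. if k + m = j then 1 else 0)
    = (if i = j then 1 else 0)"
  using ipS_slot_vectors assms by auto

text \<open>Reading off a state whose slot \<open>0\<close> carries the \<open>m \<le> 1\<close> orthogonal branches and whose slot \<open>k \<ge> 1\<close>
  carries the product branch \<open>k + m\<close>.\<close>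
lemma slot_expansion:
  fixes L c x y z :: "nat \<Rightarrow> 'r::comm_ring_1"
  assumes m: "m \<le> 1" and k: "k \<le> n"
    and slot0: "L 0 = (\<Sum>i\<in>{1..m}. c i * x i)"
    and slots: "\<forall>i\<in>{m+1..n+m}. L (i - m) = c i * y i * z i"
  shows "L k = (\<Sum>i\<in>{1..m}. c i * (if k + m = i then 1 else 0) * x i)
             + (\<Sum>i\<in>{m+1..n+m}. c i * (if k + m = i then 1 else 0) * y i * z i)"
proof (cases "k = 0")
  case True
  have "(\<Sum>i\<in>{1..m}. c i * (if k + m = i then 1 else 0) * x i) = (\<Sum>i\<in>{1..m}. c i * x i)"
    using m True by (intro sum.cong) auto
  moreover have "(\<Sum>i\<in>{m+1..n+m}. c i * (if k + m = i then 1 else 0) * y i * z i) = 0"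
    using True by (intro sum.neutral) auto
  ultimately show ?thesis using slot0 True by simp
next
  case False
  have "(\<Sum>i\<in>{1..m}. c i * (if k + m = i then 1 else 0) * x i) = 0"
    using False by (intro sum.neutral) auto
  moreover have "(\<Sum>i\<in>{m+1..n+m}. c i * (if k + m = i then 1 else 0) * y i * z i)
      = (\<Sum>i\<in>{m+1..n+m}. if i = k + m then c i * y i * z i else 0)"
    by (intro sum.cong) auto
  moreover have "c (k + m) * y (k + m) * z (k + m) = L k"
  proof -
    have "k + m \<in> {m+1..n+m}" using False k by auto
    then show ?thesis using slots by fastforce
  qed
  ultimately show ?thesis using False k by simp
qed

lemma controlled_split_expansion:
  fixes f f1 :: "'a::finite \<times> 'b::finite \<Rightarrow> complex" and c :: "nat \<Rightarrow> real" and h :: "nat \<Rightarrow> 'a"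
    and X :: "'a \<Rightarrow> 'a \<Rightarrow> complex"
  assumes out: "\<forall>(f :: 'a \<times> 'b \<Rightarrow> complex) k a b. k \<le> n \<longrightarrow>
      apply_SA (Suc n) U (\<lambda>(k', a', b'). (if k' = 0 then 1 else 0) * f (a', b')) (k, a, b) =
      (if k = 0 then sqrt (1 - w a) else if a = h (k - 1) then sqrt (w a) else 0) * branch_state X f a b"
    and m: "m \<le> 1"
    and slot0: "\<forall>a b. sqrt (1 - w a) * branch_state X f a b = (\<Sum>i\<in>{1..m}. sqrt (c i) * f1 (a, b))"
    and slots: "\<forall>i\<in>{m+1..n+m}.
      c i = w (h (i - m - 1)) * Re (ip (branch_state X f (h (i - m - 1))) (branch_state X f (h (i - m - 1)))) \<and>
      0 < Re (ip (branch_state X f (h (i - m - 1))) (branch_state X f (h (i - m - 1))))"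
  shows "\<forall>k<Suc n. \<forall>a b.
    apply_SA (Suc n) U (\<lambda>(k', a', b'). (if k' = 0 then 1 else 0) * f (a', b')) (k, a, b) =
      (\<Sum>i\<in>{1..m}. complex_of_real (sqrt (c i)) * (if k + m = i then 1 else (0::complex)) * f1 (a, b)) +
      (\<Sum>i\<in>{m+1..n+m}. complex_of_real (sqrt (c i)) * (if k + m = i then 1 else (0::complex)) *
         (if a = h (i - m - 1) then 1 else (0::complex)) * normalized (branch_state X f (h (i - m - 1))) b)"
proof (intro allI impI)
  fix k a b assume "k < Suc n"
  let ?L = "\<lambda>k. apply_SA (Suc n) U (\<lambda>(k', a', b'). (if k' = 0 then 1 else 0) * f (a', b')) (k, a, b)"
  have "?L (i - m) = sqrt (c i) * (if a = h (i - m - 1) then 1 else (0::complex))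
      * normalized (branch_state X f (h (i - m - 1))) b"
    if i: "i \<in> {m+1..n+m}" for i
  proof -
    define j where "j = h (i - m - 1)"
    have "0 < Re (ip (branch_state X f j) (branch_state X f j))"
      and "c i = w j * Re (ip (branch_state X f j) (branch_state X f j))"
      using slots i unfolding j_def by auto
    then have "sqrt (c i) * normalized (branch_state X f j) b = sqrt (w j) * branch_state X f j b"
      unfolding normalized_def by (simp add: real_sqrt_mult)
    moreover have "?L (i - m) = (if a = j then sqrt (w a) else 0) * branch_state X f a b"
      using out i unfolding j_def by (auto simp: Suc_diff_Suc)
    ultimately show ?thesis unfolding j_def[symmetric] by auto
  qed
  moreover have "?L 0 = (\<Sum>i\<in>{1..m}. sqrt (c i) * f1 (a, b))"
    using out slot0 by simp
  ultimately show "?L k = (\<Sum>i\<in>{1..m}. sqrt (c i) * (if k + m = i then 1 else (0::complex)) * f1 (a, b)) +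
      (\<Sum>i\<in>{m+1..n+m}. sqrt (c i) * (if k + m = i then 1 else (0::complex)) *
         (if a = h (i - m - 1) then 1 else (0::complex)) * normalized (branch_state X f (h (i - m - 1))) b)"
    using slot_expansion[OF m, of k n ?L "\<lambda>i. complex_of_real (sqrt (c i))" "\<lambda>i. f1 (a, b)"
        "\<lambda>i. if a = h (i - m - 1) then 1 else 0" "\<lambda>i. normalized (branch_state X f (h (i - m - 1))) b"]
      \<open>k < Suc n\<close>
    by simp
qed

lemma product_branch_conditions:
  fixes u v :: "'x::finite \<Rightarrow> complex" and a :: "'y::finite" and s t \<sigma> \<tau> :: real
  assumes st: "0 < s" "0 < t" and bounds: "branch_bounds (sqrt (s / t)) u v" and pos: "0 < Re (ip u v)"
    and \<sigma>: "0 < \<sigma>" and \<sigma>\<tau>: "\<sigma> * Re (ip v v) = \<tau> * Re (ip u u)"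
  shows "ip (\<lambda>a'. if a' = a then 1 else 0) (\<lambda>a'. if a' = a then 1 else 0) = 1 \<and>
    ip (normalized u) (normalized u) = 1 \<and> ip (normalized v) (normalized v) = 1 \<and>
    0 < \<tau> \<and> ip (normalized u) (normalized v) \<in> \<real> \<and>
    1 \<ge> sqrt (s * \<sigma> / (t * \<tau>)) \<and> sqrt (s * \<sigma> / (t * \<tau>)) \<ge> Re (ip (normalized u) (normalized v)) \<and>
    Re (ip (normalized u) (normalized v)) \<ge> 0"
proof -
  note uv = bounds[unfolded branch_bounds_def]
  define p q k where "p = Re (ip u u)" and "q = Re (ip v v)" and "k = Re (ip u v)"
  have u: "0 < p" and q: "0 < q" using ip_self_pos_if_Re_ip_pos[OF pos] unfolding p_def q_def by simp_all
  have \<tau>: "0 < \<tau>" using \<sigma>\<tau> \<sigma> q u unfolding p_def q_def by (metis mult_pos_pos zero_less_mult_pos2)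
  have uv': "ip (normalized u) (normalized v) = k / (sqrt p * sqrt q)"
    unfolding ip_normalized p_def q_def k_def using uv by (simp add: complex_is_Real_iff)
  have r: "s * \<sigma> / (t * \<tau>) = s / t * p / q"
    using \<sigma>\<tau> \<tau> q st unfolding p_def q_def by (simp add: field_simps)
  have "(k / (sqrt p * sqrt q))\<^sup>2 = k\<^sup>2 / (p * q)"
    using u q unfolding p_def by (simp add: power2_eq_square field_simps)
  also have "\<dots> \<le> s / t * p / q"
  proof -
    have "k\<^sup>2 \<le> (sqrt (s / t) * p)\<^sup>2" using uv pos unfolding k_def p_def by (simp add: power_mono)
    then show ?thesis using u q st unfolding p_def by (simp add: field_simps power2_eq_square)
  qed
  finally have "k / (sqrt p * sqrt q) \<le> sqrt (s / t * p / q)" by (simp add: real_le_rsqrt)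
  moreover have "s / t * p / q \<le> 1" using uv q st unfolding p_def q_def by (simp add: field_simps)
  ultimately show ?thesis
    using ip_normalized_self[of u] ip_normalized_self[of v] q \<tau> u uv pos r uv'
    unfolding p_def[symmetric] q_def[symmetric] k_def[symmetric] by (simp add: ip_indicator_left)
qed

text \<open>What stays in slot \<open>0\<close> is a pair of orthogonal vectors; when it vanishes no orthogonal branch is
  needed (\<open>m = 0\<close>), which matters when \<open>A\<close> is one-dimensional.\<close>
lemma exists_residual_pair:
  fixes u v :: "'a::finite \<Rightarrow> 'b::finite \<Rightarrow> complex" and w :: "'a \<Rightarrow> real"
  assumes w: "\<forall>a. 0 \<le> w a \<and> w a \<le> 1" and cancel: "(\<Sum>a\<in>UNIV. (1 - w a) * ip (u a) (v a)) = 0"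
    and two: "(\<exists>i1 i2::'a. i1 \<noteq> i2) \<or> (\<forall>a. w a = 1)"
  shows "\<exists>(m::nat) \<sigma> \<tau> (\<phi>1::'a \<times> 'b \<Rightarrow> complex) (\<psi>1::'a \<times> 'b \<Rightarrow> complex). m \<le> 1 \<and> 0 \<le> \<sigma> \<and> 0 \<le> \<tau> \<and>
    (m = 1 \<longrightarrow> ip \<phi>1 \<phi>1 = 1 \<and> ip \<psi>1 \<psi>1 = 1 \<and> ip \<phi>1 \<psi>1 = 0) \<and>
    (\<forall>a b. sqrt (1 - w a) * u a b = (\<Sum>i\<in>{1..m}. sqrt \<sigma> * \<phi>1 (a, b))) \<and>
    (\<forall>a b. sqrt (1 - w a) * v a b = (\<Sum>i\<in>{1..m}. sqrt \<tau> * \<psi>1 (a, b)))"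
proof -
  define r\<phi> r\<psi> where "r\<phi> = (\<lambda>(a, b). sqrt (1 - w a) * u a b)" and "r\<psi> = (\<lambda>(a, b). sqrt (1 - w a) * v a b)"
  show ?thesis
  proof (cases "r\<phi> = (\<lambda>x. 0) \<and> r\<psi> = (\<lambda>x. 0)")
    case True
    show ?thesis
      by (rule exI[of _ 0], rule exI[of _ 0], rule exI[of _ 0], rule exI[of _ "\<lambda>x. 0"],
          rule exI[of _ "\<lambda>x. 0"])
        (use True in \<open>simp add: r\<phi>_def r\<psi>_def fun_eq_iff\<close>)
  next
    case False
    have "r\<phi> = (\<lambda>x. 0) \<and> r\<psi> = (\<lambda>x. 0)" if "\<forall>a. w a = 1"
      using that unfolding r\<phi>_def r\<psi>_def by auto
    then obtain i1 i2 :: 'a where "i1 \<noteq> i2" using two False by auto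
    define \<sigma> \<tau> where "\<sigma> = Re (ip r\<phi> r\<phi>)" and "\<tau> = Re (ip r\<psi> r\<psi>)"
    have "(i1, undefined :: 'b) \<noteq> (i2, undefined)" using \<open>i1 \<noteq> i2\<close> by simp
    moreover have "ip r\<phi> r\<psi> = 0"
      using cancel w unfolding r\<phi>_def r\<psi>_def ip_weighted_branches by (simp flip: of_real_mult)
    ultimately obtain \<phi>1 \<psi>1 :: "'a \<times> 'b \<Rightarrow> complex"
      where pair: "ip \<phi>1 \<phi>1 = 1" "ip \<psi>1 \<psi>1 = 1" "ip \<phi>1 \<psi>1 = 0"
      "r\<phi> = (\<lambda>x. sqrt \<sigma> * \<phi>1 x)" "r\<psi> = (\<lambda>x. sqrt \<tau> * \<psi>1 x)"
      using exists_orthonormal_directions unfolding \<sigma>_def \<tau>_def by blast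
    have "0 \<le> \<sigma>" "0 \<le> \<tau>" unfolding \<sigma>_def \<tau>_def by (rule ip_self_nonneg)+
    show ?thesis
      by (rule exI[of _ 1], rule exI[of _ \<sigma>], rule exI[of _ \<tau>], rule exI[of _ \<phi>1], rule exI[of _ \<psi>1])
        (use pair \<open>0 \<le> \<sigma>\<close> \<open>0 \<le> \<tau>\<close> in \<open>simp add: r\<phi>_def r\<psi>_def fun_eq_iff\<close>)
  qed
qed

lemma splitting_from_weights:
  fixes \<phi> \<psi> :: "'a::finite \<times> 'b::finite \<Rightarrow> complex" and X :: "'a \<Rightarrow> 'a \<Rightarrow> complex"
    and w :: "'a \<Rightarrow> real" and s t :: real
  assumes X: "unitary_mat X" and w: "\<forall>a. 0 \<le> w a \<and> w a \<le> 1" and st: "0 < s" "0 < t"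
    and bounds: "\<forall>a. branch_bounds (sqrt (s / t)) (branch_state X \<phi> a) (branch_state X \<psi> a)"
    and pos: "\<forall>a. 0 < w a \<longrightarrow> 0 < Re (ip (branch_state X \<phi> a) (branch_state X \<psi> a))"
    and cancel: "(\<Sum>a\<in>UNIV. (1 - w a) * ip (branch_state X \<phi> a) (branch_state X \<psi> a)) = 0"
    and two: "(\<exists>i1 i2::'a. i1 \<noteq> i2) \<or> (\<forall>a. w a = 1)"
  shows "\<exists>(dS::nat) (z0::nat \<Rightarrow> complex) (e::nat \<Rightarrow> nat \<Rightarrow> complex) (N::nat)
           (U::nat \<times> 'a \<Rightarrow> nat \<times> 'a \<Rightarrow> complex) (m::nat)
           (si::nat \<Rightarrow> real) (ti::nat \<Rightarrow> real)
           (\<phi>i::nat \<Rightarrow> 'a \<times> 'b \<Rightarrow> complex) (\<psi>i::nat \<Rightarrow> 'a \<times> 'b \<Rightarrow> complex)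
           (\<alpha>::nat \<Rightarrow> 'a \<Rightarrow> complex) (\<eta>::nat \<Rightarrow> 'b \<Rightarrow> complex) (\<gamma>::nat \<Rightarrow> 'b \<Rightarrow> complex).
      ipS dS z0 z0 = 1 \<and>
      (\<forall>i\<in>{1..N}. \<forall>j\<in>{1..N}. ipS dS (e i) (e j) = (if i = j then 1 else 0)) \<and>
      unitary_SA dS U \<and>
      m \<le> N \<and>
      (\<forall>i\<in>{1..N}. si i \<ge> 0 \<and> ti i \<ge> 0) \<and>
      (\<forall>i\<in>{1..m}. ip (\<phi>i i) (\<phi>i i) = 1 \<and> ip (\<psi>i i) (\<psi>i i) = 1 \<and> ip (\<phi>i i) (\<psi>i i) = 0) \<and>
      (\<forall>i\<in>{m+1..N}. ip (\<alpha> i) (\<alpha> i) = 1 \<and> ip (\<eta> i) (\<eta> i) = 1 \<and> ip (\<gamma> i) (\<gamma> i) = 1 \<and>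
         ti i > 0 \<and> ip (\<eta> i) (\<gamma> i) \<in> \<real> \<and>
         1 \<ge> sqrt (s * si i / (t * ti i)) \<and>
         sqrt (s * si i / (t * ti i)) \<ge> Re (ip (\<eta> i) (\<gamma> i)) \<and>
         Re (ip (\<eta> i) (\<gamma> i)) \<ge> 0) \<and>
      (\<forall>k<dS. \<forall>a b.
         apply_SA dS U (\<lambda>(k', a', b'). z0 k' * \<phi> (a', b')) (k, a, b) =
           (\<Sum>i\<in>{1..m}. complex_of_real (sqrt (si i)) * e i k * \<phi>i i (a, b)) +
           (\<Sum>i\<in>{m+1..N}. complex_of_real (sqrt (si i)) * e i k * \<alpha> i a * \<eta> i b)) \<and>
      (\<forall>k<dS. \<forall>a b.
         apply_SA dS U (\<lambda>(k', a', b'). z0 k' * \<psi> (a', b')) (k, a, b) =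
           (\<Sum>i\<in>{1..m}. complex_of_real (sqrt (ti i)) * e i k * \<psi>i i (a, b)) +
           (\<Sum>i\<in>{m+1..N}. complex_of_real (sqrt (ti i)) * e i k * \<alpha> i a * \<gamma> i b))"
proof -
  define n where "n = card {a. 0 < w a}"
  obtain h where h: "bij_betw h {0..<n} {a. 0 < w a}"
    using ex_bij_betw_nat_finite[of "{a. 0 < w a}"] unfolding n_def by auto
  have slot: "0 < w (h i) \<and> 0 < Re (ip (branch_state X \<phi> (h i)) (branch_state X \<psi> (h i))) \<and>
    0 < Re (ip (branch_state X \<phi> (h i)) (branch_state X \<phi> (h i))) \<and>
    0 < Re (ip (branch_state X \<psi> (h i)) (branch_state X \<psi> (h i)))" if "i < n" for i
    using bij_betw_apply[OF h] pos ip_self_pos_if_Re_ip_pos that by auto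
  obtain U where U: "unitary_SA (Suc n) U"
    and out: "\<forall>(f :: 'a \<times> 'b \<Rightarrow> complex) k a b. k \<le> n \<longrightarrow>
       apply_SA (Suc n) U (\<lambda>(k', a', b'). (if k' = 0 then 1 else 0) * f (a', b')) (k, a, b) =
       (if k = 0 then sqrt (1 - w a) else if a = h (k - 1) then sqrt (w a) else 0) * branch_state X f a b"
    using exists_controlled_split[OF X w h, where 'b='b] by (elim exE conjE)
  obtain m :: nat and \<sigma> \<tau> :: real and \<phi>1 \<psi>1 :: "'a \<times> 'b \<Rightarrow> complex"
    where m: "m \<le> 1" and \<sigma>\<tau>: "0 \<le> \<sigma>" "0 \<le> \<tau>"
    and orth: "m = 1 \<longrightarrow> ip \<phi>1 \<phi>1 = 1 \<and> ip \<psi>1 \<psi>1 = 1 \<and> ip \<phi>1 \<psi>1 = 0"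
    and slot0: "\<forall>a b. sqrt (1 - w a) * branch_state X \<phi> a b = (\<Sum>i\<in>{1..m}. sqrt \<sigma> * \<phi>1 (a, b))"
      "\<forall>a b. sqrt (1 - w a) * branch_state X \<psi> a b = (\<Sum>i\<in>{1..m}. sqrt \<tau> * \<psi>1 (a, b))"
    using exists_residual_pair[OF w cancel two] by blast
  define si where "si i = (if i \<le> m then \<sigma> else
    w (h (i - m - 1)) * Re (ip (branch_state X \<phi> (h (i - m - 1))) (branch_state X \<phi> (h (i - m - 1)))))" for i
  define ti where "ti i = (if i \<le> m then \<tau> else
    w (h (i - m - 1)) * Re (ip (branch_state X \<psi> (h (i - m - 1))) (branch_state X \<psi> (h (i - m - 1)))))" for i
  show ?thesis
  proof (rule exI[of _ "Suc n"], rule exI[of _ "\<lambda>k. if k = 0 then 1 else 0"],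
      rule exI[of _ "\<lambda>i k. if k + m = i then 1 else 0"], rule exI[of _ "n + m"], rule exI[of _ U],
      rule exI[of _ m], rule exI[of _ si], rule exI[of _ ti], rule exI[of _ "\<lambda>i. \<phi>1"],
      rule exI[of _ "\<lambda>i. \<psi>1"], rule exI[of _ "\<lambda>i a. if a = h (i - m - 1) then 1 else 0"],
      rule exI[of _ "\<lambda>i. normalized (branch_state X \<phi> (h (i - m - 1)))"],
      rule exI[of _ "\<lambda>i. normalized (branch_state X \<psi> (h (i - m - 1)))"],
      intro conjI ipS_slot_zero ipS_slots_orthonormal[OF m] U le_add2, goal_cases)
    case 1
    show ?case using w \<sigma>\<tau> unfolding si_def ti_def by (simp add: ip_self_nonneg)
  next
    case 2
    show ?case using orth m by auto
  next
    case 3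
    show ?case using bounds slot
      by (intro ballI product_branch_conditions[OF st]) (auto simp: si_def ti_def)
  next
    case 4
    show ?case using slot slot0(1) by (intro controlled_split_expansion[OF out m]) (auto simp: si_def)
  next
    case 5
    show ?case using slot slot0(2) by (intro controlled_split_expansion[OF out m]) (auto simp: ti_def)
  qed
qed

theorem lemma4:
  fixes \<phi> \<psi> :: "'a::finite \<times> 'b::finite \<Rightarrow> complex" and s t :: real
  assumes "ip \<phi> \<phi> = 1" and "ip \<psi> \<psi> = 1"
    and "ip \<phi> \<psi> \<in> \<real>" and "Re (ip \<phi> \<psi>) > 0"
    and "s > 0" and "t > 0" and "s + t = 1" and "s \<le> t"
    and "sqrt (s / t) \<ge> Re (ip \<phi> \<psi>)"
  shows "\<exists>(dS::nat) (z0::nat \<Rightarrow> complex) (e::nat \<Rightarrow> nat \<Rightarrow> complex) (N::nat)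
           (U::nat \<times> 'a \<Rightarrow> nat \<times> 'a \<Rightarrow> complex) (m::nat)
           (si::nat \<Rightarrow> real) (ti::nat \<Rightarrow> real)
           (\<phi>i::nat \<Rightarrow> 'a \<times> 'b \<Rightarrow> complex) (\<psi>i::nat \<Rightarrow> 'a \<times> 'b \<Rightarrow> complex)
           (\<alpha>::nat \<Rightarrow> 'a \<Rightarrow> complex) (\<eta>::nat \<Rightarrow> 'b \<Rightarrow> complex) (\<gamma>::nat \<Rightarrow> 'b \<Rightarrow> complex).
      ipS dS z0 z0 = 1 \<and>
      (\<forall>i\<in>{1..N}. \<forall>j\<in>{1..N}. ipS dS (e i) (e j) = (if i = j then 1 else 0)) \<and>
      unitary_SA dS U \<and>
      m \<le> N \<and>
      (\<forall>i\<in>{1..N}. si i \<ge> 0 \<and> ti i \<ge> 0) \<and>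
      (\<forall>i\<in>{1..m}. ip (\<phi>i i) (\<phi>i i) = 1 \<and> ip (\<psi>i i) (\<psi>i i) = 1 \<and> ip (\<phi>i i) (\<psi>i i) = 0) \<and>
      (\<forall>i\<in>{m+1..N}. ip (\<alpha> i) (\<alpha> i) = 1 \<and> ip (\<eta> i) (\<eta> i) = 1 \<and> ip (\<gamma> i) (\<gamma> i) = 1 \<and>
         ti i > 0 \<and> ip (\<eta> i) (\<gamma> i) \<in> \<real> \<and>
         1 \<ge> sqrt (s * si i / (t * ti i)) \<and>
         sqrt (s * si i / (t * ti i)) \<ge> Re (ip (\<eta> i) (\<gamma> i)) \<and>
         Re (ip (\<eta> i) (\<gamma> i)) \<ge> 0) \<and>
      (\<forall>k<dS. \<forall>a b.
         apply_SA dS U (\<lambda>(k', a', b'). z0 k' * \<phi> (a', b')) (k, a, b) =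
           (\<Sum>i\<in>{1..m}. complex_of_real (sqrt (si i)) * e i k * \<phi>i i (a, b)) +
           (\<Sum>i\<in>{m+1..N}. complex_of_real (sqrt (si i)) * e i k * \<alpha> i a * \<eta> i b)) \<and>
      (\<forall>k<dS. \<forall>a b.
         apply_SA dS U (\<lambda>(k', a', b'). z0 k' * \<psi> (a', b')) (k, a, b) =
           (\<Sum>i\<in>{1..m}. complex_of_real (sqrt (ti i)) * e i k * \<psi>i i (a, b)) +
           (\<Sum>i\<in>{m+1..N}. complex_of_real (sqrt (ti i)) * e i k * \<alpha> i a * \<gamma> i b))"
proof -
  have \<phi>\<psi>: "ip \<phi> \<psi> = Re (ip \<phi> \<psi>)" using assms(3) by (simp add: complex_is_Real_iff)
  have "sqrt (s / t) \<le> 1" using assms(5,6,8) by simp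
  then obtain X where X: "unitary_mat X"
    and bounds: "\<forall>a. branch_bounds (sqrt (s / t)) (branch_state X \<phi> a) (branch_state X \<psi> a)"
    using exists_basis_with_bounded_branches[OF assms(1,2) \<phi>\<psi> _ assms(9)] assms(4) by auto
  obtain w :: "'a \<Rightarrow> real" where "\<forall>a. 0 \<le> w a \<and> w a \<le> 1"
    and "\<forall>a. 0 < w a \<longrightarrow> 0 < Re (ip (branch_state X \<phi> a) (branch_state X \<psi> a))"
    and "(\<Sum>a\<in>UNIV. (1 - w a) * ip (branch_state X \<phi> a) (branch_state X \<psi> a)) = 0"
    and "(\<exists>i1 i2::'a. i1 \<noteq> i2) \<or> (\<forall>a. w a = 1)"
    using exists_branch_weights[OF X \<phi>\<psi>] bounds assms(4) unfolding branch_bounds_def by blast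
  then show ?thesis using splitting_from_weights[OF X _ assms(5,6) bounds] by blast
qed

end
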